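(* Let $k$ be a field, $n\ge3$, $A=k[X_1,\dots,X_{n-1}]$ with $\deg X_i=1$, $\mathfrak m=(X_1,\dots,X_{n-1})$, $d\ge1$, $f_1,\dots,f_n\in A_d$ nonzero, $I=(f_1,\dots,f_n)$, and $h:k[T_1,\dots,T_n]\to A$, $T_i\mapsto f_i$. Suppose $I$ is of linear type outside $V(\mathfrak m)$, and let $\eta$ be an integer such that $H^0_{\mathfrak m}(\mathrm{Sym}_A(I))_\nu=0$ for all $\nu\ge\eta$. Then $\mathrm{ann}_{k[T_1,\dots,T_n]}(\mathrm{Sym}_A(I)_\nu)=\ker(h)$ for all $\nu\ge\eta$.
   Context: $\mathrm{Sym}_A(I)=A[T_1,\dots,T_n]/\ker\alpha$, where $\alpha(T_i)=f_i$ and $\ker\alpha$ is generated by the $\sum b_iT_i$ with $b_i\in A$, $\sum b_if_i=0$; it is bigraded, and $\mathrm{Sym}_A(I)_\nu$ denotes its component of degree $\nu$ with respect to the grading of $A$ (the image of $A_\nu[T_1,\dots,T_n]$), a $k[T_1,\dots,T_n]$-module. $H^0_{\mathfrak m}(N)$ is the submodule of elements annihilated by a power of $\mathfrak m$. $I$ is of linear type outside $V(\mathfrak m)$ if for every prime $\mathfrak p\not\supseteq\mathfrak m$, $\mathrm{Sym}_{A_{\mathfrak p}}(I_{\mathfrak p})\to\mathrm{Rees}_{A_{\mathfrak p}}(I_{\mathfrak p})$ is an isomorphism. *)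

theory Defs
  imports Main "HOL-Library.Poly_Mapping"
begin

text \<open>Polynomials over a field 'k in the variables of type nat + nat:
  Inl i stands for X_(i+1) (i < n-1), Inr j stands for T_(j+1) (j < n).
  All rings of the statement (A, k[T], A[T]) are subrings of this one ring.\<close>

type_synonym 'k mpoly = "((nat + nat) \<Rightarrow>\<^sub>0 nat) \<Rightarrow>\<^sub>0 'k"

definition var :: "nat + nat \<Rightarrow> 'k::comm_ring_1 mpoly" where
  "var v = Poly_Mapping.single (Poly_Mapping.single v 1) 1"

definition vars_in :: "(nat + nat) set \<Rightarrow> 'k::comm_ring_1 mpoly set" where
  "vars_in V = {p. \<forall>m\<in>Poly_Mapping.keys p. Poly_Mapping.keys m \<subseteq> V}"

definition ringA :: "nat \<Rightarrow> 'k::comm_ring_1 mpoly set" where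
  "ringA n = vars_in (Inl ` {..<n-1})"
definition ringT :: "nat \<Rightarrow> 'k::comm_ring_1 mpoly set" where
  "ringT n = vars_in (Inr ` {..<n})"
definition ringAT :: "nat \<Rightarrow> 'k::comm_ring_1 mpoly set" where
  "ringAT n = vars_in (Inl ` {..<n-1} \<union> Inr ` {..<n})"

definition degX :: "((nat + nat) \<Rightarrow>\<^sub>0 nat) \<Rightarrow> nat" where
  "degX m = (\<Sum>v\<in>Poly_Mapping.keys m. if isl v then Poly_Mapping.lookup m v else 0)"

definition compA :: "nat \<Rightarrow> nat \<Rightarrow> 'k::comm_ring_1 mpoly set" where
  "compA n d = {p \<in> ringA n. \<forall>m\<in>Poly_Mapping.keys p. degX m = d}"

definition compAT :: "nat \<Rightarrow> nat \<Rightarrow> 'k::comm_ring_1 mpoly set" where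
  "compAT n \<nu> = {p \<in> ringAT n. \<forall>m\<in>Poly_Mapping.keys p. degX m = \<nu>}"

definition subst :: "(nat + nat \<Rightarrow> 'k::comm_ring_1 mpoly) \<Rightarrow> 'k mpoly \<Rightarrow> 'k mpoly" where
  "subst \<sigma> p = (\<Sum>m\<in>Poly_Mapping.keys p. Poly_Mapping.single 0 (Poly_Mapping.lookup p m) *
                     (\<Prod>v\<in>Poly_Mapping.keys m. \<sigma> v ^ Poly_Mapping.lookup m v))"

inductive_set ideal_gen :: "'a::comm_ring_1 set \<Rightarrow> 'a set \<Rightarrow> 'a set"
  for C :: "'a set" and S :: "'a set" where
  zero: "0 \<in> ideal_gen C S"
| step: "c \<in> C \<Longrightarrow> s \<in> S \<Longrightarrow> x \<in> ideal_gen C S \<Longrightarrow> c * s + x \<in> ideal_gen C S"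

definition is_ideal :: "'a::comm_ring_1 set \<Rightarrow> 'a set \<Rightarrow> bool" where
  "is_ideal C P \<longleftrightarrow> P \<subseteq> C \<and> 0 \<in> P \<and> (\<forall>x\<in>P. \<forall>y\<in>P. x + y \<in> P)
      \<and> (\<forall>a\<in>C. \<forall>x\<in>P. a * x \<in> P)"

definition is_prime_ideal :: "'a::comm_ring_1 set \<Rightarrow> 'a set \<Rightarrow> bool" where
  "is_prime_ideal C P \<longleftrightarrow> is_ideal C P \<and> P \<noteq> C \<and>
      (\<forall>a\<in>C. \<forall>b\<in>C. a * b \<in> P \<longrightarrow> a \<in> P \<or> b \<in> P)"

definition idm :: "nat \<Rightarrow> 'k::comm_ring_1 mpoly set" where
  "idm n = ideal_gen (ringA n) {var (Inl i) | i. i < n - 1}"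
definition idm_pow :: "nat \<Rightarrow> nat \<Rightarrow> 'k::comm_ring_1 mpoly set" where
  "idm_pow n t = ideal_gen (ringA n)
     {\<Prod>j<t. var (Inl (a j)) | a. \<forall>j<t. a j < n - 1}"

text \<open>ker alpha: ideal of A[T] generated by the linear forms sum b_i T_i with
  b_i in A and sum b_i f_i = 0;  Sym_A(I) = A[T] / symK.\<close>
definition symK :: "nat \<Rightarrow> (nat \<Rightarrow> 'k::comm_ring_1 mpoly) \<Rightarrow> 'k mpoly set" where
  "symK n f = ideal_gen (ringAT n)
     {(\<Sum>i<n. b i * var (Inr i)) | b. (\<forall>i<n. b i \<in> ringA n) \<and> (\<Sum>i<n. b i * f i) = 0}"

definition hmap :: "nat \<Rightarrow> (nat \<Rightarrow> 'k::comm_ring_1 mpoly) \<Rightarrow> 'k mpoly \<Rightarrow> 'k mpoly" where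
  "hmap n f = subst (\<lambda>v. case v of Inl i \<Rightarrow> var (Inl i) | Inr j \<Rightarrow> f j)"

definition ker_h :: "nat \<Rightarrow> (nat \<Rightarrow> 'k::comm_ring_1 mpoly) \<Rightarrow> 'k mpoly set" where
  "ker_h n f = {g \<in> ringT n. hmap n f g = 0}"

text \<open>Kernel of A[T] -> Rees_A(I) = A[t] (t = var (Inr n), a fresh variable), T_i |-> f_i t.\<close>
definition reesJ :: "nat \<Rightarrow> (nat \<Rightarrow> 'k::comm_ring_1 mpoly) \<Rightarrow> 'k mpoly set" where
  "reesJ n f = {g \<in> ringAT n.
     subst (\<lambda>v. case v of Inl i \<Rightarrow> var (Inl i) | Inr j \<Rightarrow> f j * var (Inr n)) g = 0}"

text \<open>I is of linear type outside V(m): for every prime p of A with m not contained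
  in p, Sym_{A_p}(I_p) -> Rees_{A_p}(I_p) is an isomorphism; since this map is the
  localisation at p of the surjection Sym_A(I) -> Rees_A(I) whose kernel is
  reesJ/symK, this says every element of reesJ is killed in Sym by some s in A - p.\<close>
definition linear_type_outside_m :: "nat \<Rightarrow> (nat \<Rightarrow> 'k::comm_ring_1 mpoly) \<Rightarrow> bool" where
  "linear_type_outside_m n f \<longleftrightarrow>
     (\<forall>P. is_prime_ideal (ringA n) P \<and> \<not> idm n \<subseteq> P \<longrightarrow>
        (\<forall>g\<in>reesJ n f. \<exists>s\<in>ringA n - P. s * g \<in> symK n f))"

text \<open>H^0_m(Sym_A(I))_nu = 0: every element of Sym_A(I)_nu (class of some p in A_nu[T])
  annihilated by a power of m is zero.\<close>
definition H0m_vanishes :: "nat \<Rightarrow> (nat \<Rightarrow> 'k::comm_ring_1 mpoly) \<Rightarrow> nat \<Rightarrow> bool" where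
  "H0m_vanishes n f \<nu> \<longleftrightarrow>
     (\<forall>p\<in>compAT n \<nu>. (\<exists>t. \<forall>q\<in>idm_pow n t. q * p \<in> symK n f) \<longrightarrow> p \<in> symK n f)"

definition ann_sym :: "nat \<Rightarrow> (nat \<Rightarrow> 'k::comm_ring_1 mpoly) \<Rightarrow> nat \<Rightarrow> 'k mpoly set" where
  "ann_sym n f \<nu> = {g \<in> ringT n. \<forall>p\<in>compAT n \<nu>. g * p \<in> symK n f}"

end

theory Submission
  imports Defs
begin

(* If g kills Sym_A(I)_nu, it kills the class of X_1^nu; the Rees map T_i |-> f_i t
  vanishes on the symmetric ideal, so g(f t) X_1^nu = 0, hence g(f t) = 0 and, at t = 1,
  h(g) = 0. Conversely, if h(g) = 0 then g(f t) = 0 as well (the f_i are forms of the same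
  degree), so for every p in A_nu[T] the product g p lies in the kernel of
  Sym_A(I) -> Rees_A(I). Linear type outside V(m) says that the annihilator in A of such an
  element lies in no prime not containing m; by Krull's lemma it then contains a power of
  every X_i, hence a power of m. So g p is m-torsion of degree nu in Sym_A(I), and it
  vanishes because H^0_m(Sym_A(I))_nu = 0. *)

section \<open>Substitution into polynomials\<close>

lemma poly_mapping_expansion:
  "p = (\<Sum>k\<in>Poly_Mapping.keys p. Poly_Mapping.single k (Poly_Mapping.lookup p k))"
  by (rule poly_mapping_eqI) (simp add: lookup_sum lookup_single when_def in_keys_iff)

lemma keys_add_nat:
  "Poly_Mapping.keys ((a :: 'x \<Rightarrow>\<^sub>0 nat) + b) = Poly_Mapping.keys a \<union> Poly_Mapping.keys b"
  by (auto simp: in_keys_iff lookup_add)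

definition eval_monom :: "(nat + nat \<Rightarrow> 'k::comm_ring_1 mpoly) \<Rightarrow> ((nat + nat) \<Rightarrow>\<^sub>0 nat) \<Rightarrow> 'k mpoly" where
  "eval_monom \<sigma> m = (\<Prod>v\<in>Poly_Mapping.keys m. \<sigma> v ^ Poly_Mapping.lookup m v)"

lemma eval_monom_superset:
  assumes "finite S" "Poly_Mapping.keys m \<subseteq> S"
  shows "eval_monom \<sigma> m = (\<Prod>v\<in>S. \<sigma> v ^ Poly_Mapping.lookup m v)"
  unfolding eval_monom_def using assms by (intro prod.mono_neutral_left) (auto simp: in_keys_iff)

lemma eval_monom_zero [simp]: "eval_monom \<sigma> 0 = 1"
  by (simp add: eval_monom_def)

lemma eval_monom_add: "eval_monom \<sigma> (a + b) = eval_monom \<sigma> a * eval_monom \<sigma> b"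
proof -
  let ?S = "Poly_Mapping.keys a \<union> Poly_Mapping.keys b"
  have "eval_monom \<sigma> (a + b) = (\<Prod>v\<in>?S. \<sigma> v ^ Poly_Mapping.lookup a v * \<sigma> v ^ Poly_Mapping.lookup b v)"
    by (simp add: eval_monom_superset[of ?S] keys_add lookup_add power_add)
  then show ?thesis
    by (simp add: prod.distrib eval_monom_superset[of ?S])
qed

lemma var_power: "var v ^ e = Poly_Mapping.single (Poly_Mapping.single v e) 1"
  by (induction e) (simp_all add: var_def mult_single single_add[symmetric] add.commute)

lemma prod_single_one:
  "(\<Prod>i\<in>I. Poly_Mapping.single (g i) (1::'a::comm_semiring_1)) = Poly_Mapping.single (\<Sum>i\<in>I. g i) 1"
  by (induction I rule: infinite_finite_induct) (auto simp: mult_single)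

lemma eval_monom_var: "eval_monom var m = Poly_Mapping.single m 1"
  by (simp add: eval_monom_def var_power prod_single_one poly_mapping_expansion[symmetric])

lemma subst_eq_sum_eval_monom:
  "subst \<sigma> p = (\<Sum>m\<in>Poly_Mapping.keys p. Poly_Mapping.single 0 (Poly_Mapping.lookup p m) * eval_monom \<sigma> m)"
  by (simp add: subst_def eval_monom_def)

lemma subst_superset:
  assumes "finite S" "Poly_Mapping.keys p \<subseteq> S"
  shows "subst \<sigma> p = (\<Sum>m\<in>S. Poly_Mapping.single 0 (Poly_Mapping.lookup p m) * eval_monom \<sigma> m)"
  unfolding subst_eq_sum_eval_monom using assms
  by (intro sum.mono_neutral_left) (auto simp: in_keys_iff)

lemma subst_zero [simp]: "subst \<sigma> 0 = 0"
  by (simp add: subst_def)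

lemma subst_add: "subst \<sigma> (p + q) = subst \<sigma> p + subst \<sigma> q"
proof -
  let ?S = "Poly_Mapping.keys p \<union> Poly_Mapping.keys q"
  show ?thesis
    by (simp add: subst_superset[of ?S] keys_add lookup_add single_add distrib_right sum.distrib)
qed

lemma subst_sum: "subst \<sigma> (\<Sum>i\<in>I. p i) = (\<Sum>i\<in>I. subst \<sigma> (p i))"
  by (induction I rule: infinite_finite_induct) (auto simp: subst_add)

lemma subst_single: "subst \<sigma> (Poly_Mapping.single m c) = Poly_Mapping.single 0 c * eval_monom \<sigma> m"
  by (simp add: subst_eq_sum_eval_monom)

lemma subst_mult: "subst \<sigma> (p * q) = subst \<sigma> p * subst \<sigma> q"
proof -
  let ?c = "\<lambda>r m. Poly_Mapping.single 0 (Poly_Mapping.lookup r m) :: 'a mpoly"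
  have "p * q = (\<Sum>k\<in>Poly_Mapping.keys p. \<Sum>l\<in>Poly_Mapping.keys q.
        Poly_Mapping.single (k + l) (Poly_Mapping.lookup p k * Poly_Mapping.lookup q l))"
    by (subst (1 2) poly_mapping_expansion) (simp add: sum_product mult_single)
  moreover have "subst \<sigma> (Poly_Mapping.single (k + l) (Poly_Mapping.lookup p k * Poly_Mapping.lookup q l)) =
      (?c p k * eval_monom \<sigma> k) * (?c q l * eval_monom \<sigma> l)" for k l
  proof -
    have "?c p k * ?c q l = Poly_Mapping.single 0 (Poly_Mapping.lookup p k * Poly_Mapping.lookup q l)"
      by (simp add: mult_single)
    then show ?thesis
      by (simp only: subst_single eval_monom_add mult_ac)
  qed
  ultimately have "subst \<sigma> (p * q) = (\<Sum>k\<in>Poly_Mapping.keys p. \<Sum>l\<in>Poly_Mapping.keys q.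
        (?c p k * eval_monom \<sigma> k) * (?c q l * eval_monom \<sigma> l))"
    by (simp add: subst_sum)
  also have "\<dots> = subst \<sigma> p * subst \<sigma> q"
    by (simp add: subst_eq_sum_eval_monom sum_product)
  finally show ?thesis .
qed

lemma subst_one [simp]: "subst \<sigma> 1 = 1"
  using subst_single[of \<sigma> 0 1] by simp

lemma subst_const: "subst \<sigma> (Poly_Mapping.single 0 c) = Poly_Mapping.single 0 c"
  by (simp add: subst_single)

lemma subst_prod: "subst \<sigma> (\<Prod>i\<in>I. p i) = (\<Prod>i\<in>I. subst \<sigma> (p i))"
  by (induction I rule: infinite_finite_induct) (auto simp: subst_mult)

lemma subst_power: "subst \<sigma> (p ^ e) = subst \<sigma> p ^ e"
  by (induction e) (auto simp: subst_mult)

lemma subst_var [simp]: "subst \<sigma> (var v) = \<sigma> v"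
  by (simp add: var_def subst_single eval_monom_def)

lemma subst_comp: "subst \<sigma> (subst \<tau> p) = subst (\<lambda>v. subst \<sigma> (\<tau> v)) p"
  by (simp add: subst_eq_sum_eval_monom[of \<tau>] subst_eq_sum_eval_monom[of "\<lambda>v. subst \<sigma> (\<tau> v)"]
      subst_sum subst_mult subst_const eval_monom_def subst_prod subst_power)

lemma subst_cong:
  assumes "\<And>m v. m \<in> Poly_Mapping.keys p \<Longrightarrow> v \<in> Poly_Mapping.keys m \<Longrightarrow> \<sigma> v = \<tau> v"
  shows "subst \<sigma> p = subst \<tau> p"
  unfolding subst_def using assms by (intro sum.cong refl arg_cong2[where f="(*)"] prod.cong) auto

lemma subst_id:
  assumes "\<And>m v. m \<in> Poly_Mapping.keys p \<Longrightarrow> v \<in> Poly_Mapping.keys m \<Longrightarrow> \<sigma> v = var v"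
  shows "subst \<sigma> p = p"
proof -
  have "subst var p = p"
    by (subst (2) poly_mapping_expansion) (simp add: subst_eq_sum_eval_monom eval_monom_var mult_single)
  then show ?thesis using subst_cong[of p \<sigma> var] assms by metis
qed

section \<open>Subsemirings and their ideals\<close>

definition is_subsemiring :: "'a::comm_ring_1 set \<Rightarrow> bool" where
  "is_subsemiring C \<longleftrightarrow> 0 \<in> C \<and> 1 \<in> C \<and> (\<forall>a\<in>C. \<forall>b\<in>C. a + b \<in> C \<and> a * b \<in> C)"

lemma is_subsemiring_prod:
  "is_subsemiring C \<Longrightarrow> (\<And>i. i \<in> I \<Longrightarrow> x i \<in> C) \<Longrightarrow> (\<Prod>i\<in>I. x i) \<in> C"
  by (induction I rule: infinite_finite_induct) (auto simp: is_subsemiring_def)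

lemma is_subsemiring_power: "is_subsemiring C \<Longrightarrow> x \<in> C \<Longrightarrow> x ^ e \<in> C"
  using is_subsemiring_prod[of C "{..<e}" "\<lambda>_. x"] by simp

lemma vars_in_add: "p \<in> vars_in V \<Longrightarrow> q \<in> vars_in V \<Longrightarrow> p + q \<in> vars_in V"
  unfolding vars_in_def using keys_add[of p q] by blast

lemma vars_in_mult: "p \<in> vars_in V \<Longrightarrow> q \<in> vars_in V \<Longrightarrow> p * q \<in> vars_in V"
  unfolding vars_in_def using keys_mult[of p q] by (fastforce simp: keys_add_nat)

lemma is_subsemiring_vars_in: "is_subsemiring (vars_in V)"
proof -
  have "0 \<in> vars_in V" "1 \<in> vars_in V" by (simp_all add: vars_in_def)
  then show ?thesis using vars_in_add vars_in_mult unfolding is_subsemiring_def by blast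
qed

lemma vars_in_var: "v \<in> V \<Longrightarrow> var v \<in> vars_in V"
  by (simp add: var_def vars_in_def)

lemma vars_in_mono: "V \<subseteq> W \<Longrightarrow> vars_in V \<subseteq> vars_in W"
  unfolding vars_in_def by blast

lemma ideal_gen_add: "x \<in> ideal_gen C S \<Longrightarrow> y \<in> ideal_gen C S \<Longrightarrow> x + y \<in> ideal_gen C S"
  by (induction x rule: ideal_gen.induct) (auto simp: add.assoc intro: ideal_gen.intros)

lemma ideal_gen_mult:
  assumes "is_subsemiring C" "a \<in> C"
  shows "x \<in> ideal_gen C S \<Longrightarrow> a * x \<in> ideal_gen C S"
proof (induction x rule: ideal_gen.induct)
  case (step c s x)
  have "a * (c * s + x) = (a * c) * s + a * x" by (simp add: algebra_simps)
  then show ?case using assms step by (auto simp: is_subsemiring_def intro: ideal_gen.step)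
qed (simp add: ideal_gen.zero)

lemma ideal_gen_base: "1 \<in> C \<Longrightarrow> s \<in> S \<Longrightarrow> s \<in> ideal_gen C S"
  using ideal_gen.step[of 1 C s S 0, OF _ _ ideal_gen.zero] by simp

lemma ideal_gen_least:
  assumes "is_ideal C J" "S \<subseteq> J"
  shows "ideal_gen C S \<subseteq> J"
proof
  fix x assume "x \<in> ideal_gen C S"
  then show "x \<in> J"
    by (induction x rule: ideal_gen.induct) (use assms in \<open>auto simp: is_ideal_def\<close>)
qed

lemma is_ideal_Union_chain:
  assumes "Ch \<noteq> {}" "\<forall>I\<in>Ch. is_ideal C I" "\<forall>X\<in>Ch. \<forall>Y\<in>Ch. X \<subseteq> Y \<or> Y \<subseteq> X"
  shows "is_ideal C (\<Union>Ch)"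
  unfolding is_ideal_def
proof (intro conjI ballI)
  fix u v assume "u \<in> \<Union>Ch" "v \<in> \<Union>Ch"
  then obtain X Y where "X \<in> Ch" "Y \<in> Ch" "u \<in> X" "v \<in> Y" by blast
  moreover have "X \<subseteq> Y \<or> Y \<subseteq> X" using assms(3) \<open>X \<in> Ch\<close> \<open>Y \<in> Ch\<close> by blast
  ultimately obtain Z where "Z \<in> Ch" "u \<in> Z" "v \<in> Z" by blast
  then show "u + v \<in> \<Union>Ch" using assms(2) unfolding is_ideal_def by blast
next
  fix a u assume "a \<in> C" "u \<in> \<Union>Ch"
  then show "a * u \<in> \<Union>Ch" using assms(2) unfolding is_ideal_def by blast
qed (use assms in \<open>auto simp: is_ideal_def\<close>)

lemma is_ideal_add_multiples:
  assumes C: "is_subsemiring C" and P: "is_ideal C P" and a: "a \<in> C"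
  shows "is_ideal C {p + c * a | p c. p \<in> P \<and> c \<in> C}" (is "is_ideal C ?Q")
proof -
  have C0: "0 \<in> C" and C1: "1 \<in> C"
    and Cadd: "\<And>x y. x \<in> C \<Longrightarrow> y \<in> C \<Longrightarrow> x + y \<in> C"
    and Cmul: "\<And>x y. x \<in> C \<Longrightarrow> y \<in> C \<Longrightarrow> x * y \<in> C"
    using C by (simp_all add: is_subsemiring_def)
  have PC: "P \<subseteq> C" and P0: "0 \<in> P"
    and Padd: "\<And>x y. x \<in> P \<Longrightarrow> y \<in> P \<Longrightarrow> x + y \<in> P"
    and Pmul: "\<And>r x. r \<in> C \<Longrightarrow> x \<in> P \<Longrightarrow> r * x \<in> P"
    using P by (simp_all add: is_ideal_def subset_eq)
  have "?Q \<subseteq> C" using PC a Cadd Cmul by blast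
  moreover have "0 \<in> ?Q" using P0 C0 by force
  moreover have "u + v \<in> ?Q" if "u \<in> ?Q" "v \<in> ?Q" for u v
  proof -
    from that obtain p1 c1 p2 c2 where
      "u = p1 + c1 * a" "v = p2 + c2 * a" "p1 \<in> P" "p2 \<in> P" "c1 \<in> C" "c2 \<in> C"
      by blast
    moreover have "u + v = (p1 + p2) + (c1 + c2) * a"
      using \<open>u = p1 + c1 * a\<close> \<open>v = p2 + c2 * a\<close> by (simp add: algebra_simps)
    ultimately show ?thesis using Padd Cadd by blast
  qed
  moreover have "r * u \<in> ?Q" if "r \<in> C" "u \<in> ?Q" for r u
  proof -
    from that obtain p c where "u = p + c * a" "p \<in> P" "c \<in> C" by blast
    moreover have "r * u = r * p + (r * c) * a"
      using \<open>u = p + c * a\<close> by (simp add: algebra_simps)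
    ultimately show ?thesis using that(1) Pmul Cmul by blast
  qed
  ultimately show ?thesis unfolding is_ideal_def by blast
qed

lemma maximal_ideal_avoiding_powers_is_prime:
  assumes C: "is_subsemiring C" and P: "is_ideal C P" and avoid: "\<forall>e. x ^ e \<notin> P"
    and max: "\<And>Q. is_ideal C Q \<Longrightarrow> P \<subseteq> Q \<Longrightarrow> \<forall>e. x ^ e \<notin> Q \<Longrightarrow> Q = P"
  shows "is_prime_ideal C P"
proof -
  have C0: "0 \<in> C" and C1: "1 \<in> C"
    and Cadd: "\<And>u v. u \<in> C \<Longrightarrow> v \<in> C \<Longrightarrow> u + v \<in> C"
    and Cmul: "\<And>u v. u \<in> C \<Longrightarrow> v \<in> C \<Longrightarrow> u * v \<in> C"
    using C by (simp_all add: is_subsemiring_def)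
  have PC: "P \<subseteq> C" and P0: "0 \<in> P"
    and Padd: "\<And>u v. u \<in> P \<Longrightarrow> v \<in> P \<Longrightarrow> u + v \<in> P"
    and Pmul: "\<And>r u. r \<in> C \<Longrightarrow> u \<in> P \<Longrightarrow> r * u \<in> P"
    using P by (simp_all add: is_ideal_def)
  have reach: "\<exists>e p c. p \<in> P \<and> c \<in> C \<and> x ^ e = p + c * a" if "a \<in> C" "a \<notin> P" for a
  proof -
    let ?Q = "{p + c * a | p c. p \<in> P \<and> c \<in> C}"
    have "is_ideal C ?Q" using C P \<open>a \<in> C\<close> by (rule is_ideal_add_multiples)
    moreover have "P \<subseteq> ?Q"
    proof
      fix p assume "p \<in> P"
      then have "p = p + 0 * a" "0 \<in> C" using C0 by simp_all
      then show "p \<in> ?Q" using \<open>p \<in> P\<close> by blast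
    qed
    moreover have "a = 0 + 1 * a" by simp
    then have "a \<in> ?Q" using P0 C1 by blast
    ultimately have "?Q \<noteq> P \<and> is_ideal C ?Q \<and> P \<subseteq> ?Q" using \<open>a \<notin> P\<close> by blast
    then obtain e where "x ^ e \<in> ?Q" using max by blast
    then show ?thesis by blast
  qed
  have "a \<in> P \<or> b \<in> P" if ab: "a \<in> C" "b \<in> C" "a * b \<in> P" for a b
  proof (rule ccontr)
    assume "\<not> (a \<in> P \<or> b \<in> P)"
    then obtain e p c e' p' c' where
      pc: "p \<in> P" "c \<in> C" "x ^ e = p + c * a" and pc': "p' \<in> P" "c' \<in> C" "x ^ e' = p' + c' * b"
      using reach ab by meson
    have "x ^ (e + e') = (p' + c' * b) * p + (c * a) * p' + (c * c') * (a * b)"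
      using pc(3) pc'(3) by (simp add: power_add algebra_simps)
    also have "\<dots> \<in> P"
    proof -
      have "p' + c' * b \<in> C" using pc' ab PC Cadd Cmul by blast
      then have "(p' + c' * b) * p \<in> P" using Pmul pc by blast
      moreover have "(c * a) * p' \<in> P" using Pmul Cmul pc pc' ab by blast
      moreover have "(c * c') * (a * b) \<in> P" using Pmul Cmul pc pc' ab by blast
      ultimately show ?thesis using Padd by blast
    qed
    finally show False using avoid by blast
  qed
  moreover have "P \<noteq> C" using avoid C1 by (metis power_0)
  ultimately show ?thesis using P unfolding is_prime_ideal_def by blast
qed

lemma prime_ideal_avoiding_powers:
  assumes C: "is_subsemiring C" and J: "is_ideal C J" and avoid: "\<forall>e. x ^ e \<notin> J"
  shows "\<exists>P. is_prime_ideal C P \<and> J \<subseteq> P \<and> x \<notin> P"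
proof -
  define \<A> where "\<A> = {I. is_ideal C I \<and> J \<subseteq> I \<and> (\<forall>e. x ^ e \<notin> I)}"
  have "\<exists>P\<in>\<A>. \<forall>Q\<in>\<A>. P \<subseteq> Q \<longrightarrow> Q = P"
  proof (rule subset_Zorn_nonempty)
    show "\<A> \<noteq> {}" using J avoid unfolding \<A>_def by blast
    fix Ch assume "Ch \<noteq> {}" "subset.chain \<A> Ch"
    then have "Ch \<subseteq> \<A>" "\<forall>X\<in>Ch. \<forall>Y\<in>Ch. X \<subseteq> Y \<or> Y \<subseteq> X"
      by (simp_all add: subset_chain_def)
    then have "is_ideal C (\<Union>Ch)"
      using \<open>Ch \<noteq> {}\<close> by (intro is_ideal_Union_chain) (auto simp: \<A>_def)
    then show "\<Union>Ch \<in> \<A>" using \<open>Ch \<noteq> {}\<close> \<open>Ch \<subseteq> \<A>\<close> unfolding \<A>_def by blast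
  qed
  then obtain P where P: "P \<in> \<A>" and max: "\<forall>Q\<in>\<A>. P \<subseteq> Q \<longrightarrow> Q = P"
    by blast
  then have "is_ideal C P" "J \<subseteq> P" "\<forall>e. x ^ e \<notin> P" by (simp_all add: \<A>_def)
  moreover have "Q = P" if "is_ideal C Q" "P \<subseteq> Q" "\<forall>e. x ^ e \<notin> Q" for Q
    using max that \<open>J \<subseteq> P\<close> unfolding \<A>_def by blast
  moreover have "x \<notin> P" using \<open>\<forall>e. x ^ e \<notin> P\<close> power_one_right by metis
  ultimately show ?thesis
    using maximal_ideal_avoiding_powers_is_prime[OF C, of P x] by blast
qed

lemma pigeonhole_large_fibre:
  fixes a :: "nat \<Rightarrow> nat"
  assumes a: "\<forall>j<N * E. a j < N" and N: "N \<ge> 1"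
  shows "\<exists>i<N. E \<le> card {j. j < N * E \<and> a j = i}"
proof (rule ccontr)
  assume "\<not> ?thesis"
  then have small: "\<forall>i<N. card {j. j < N * E \<and> a j = i} \<le> E - 1" and "E \<ge> 1"
    using N by (auto simp: not_le)
  have "{..<N * E} = (\<Union>i<N. {j. j < N * E \<and> a j = i})" using a by auto
  then have "N * E = card (\<Union>i<N. {j. j < N * E \<and> a j = i})" by (metis card_lessThan)
  also have "\<dots> \<le> (\<Sum>i<N. card {j. j < N * E \<and> a j = i})" by (rule card_UN_le) simp
  also have "\<dots> \<le> N * (E - 1)" using sum_mono[of "{..<N}" _ "\<lambda>_. E - 1"] small by simp
  finally show False using N \<open>E \<ge> 1\<close> mult_le_cancel1[of N E "E - 1"] by linarith
qed

lemma ideal_power_mono: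
  assumes "is_subsemiring C" "is_ideal C J" "x \<in> C" "x ^ e \<in> J" "e \<le> E"
  shows "x ^ E \<in> J"
proof -
  have "x ^ E = x ^ (E - e) * x ^ e" using \<open>e \<le> E\<close> by (simp flip: power_add)
  then show ?thesis using assms is_subsemiring_power unfolding is_ideal_def by metis
qed

lemma prod_mem_ideal_if_powers:
  assumes C: "is_subsemiring C" and J: "is_ideal C J"
    and x: "\<forall>i<N. x i \<in> C" and xE: "\<forall>i<N. x i ^ E \<in> J"
    and a: "\<forall>j<N * E. a j < N" and N: "N \<ge> 1"
  shows "(\<Prod>j<N * E. x (a j)) \<in> J"
proof -
  obtain i where i: "i < N" and large: "E \<le> card {j. j < N * E \<and> a j = i}"
    using pigeonhole_large_fibre[OF a N] by blast
  define F where "F = {j. j < N * E \<and> a j = i}"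
  have "(\<Prod>j<N * E. x (a j)) = (\<Prod>j\<in>{..<N * E} - F. x (a j)) * (\<Prod>j\<in>F. x (a j))"
    by (rule prod.subset_diff) (auto simp: F_def)
  also have "(\<Prod>j\<in>F. x (a j)) = x i ^ (card F - E) * x i ^ E"
    using large by (simp add: F_def flip: power_add)
  finally have "(\<Prod>j<N * E. x (a j)) = ((\<Prod>j\<in>{..<N * E} - F. x (a j)) * x i ^ (card F - E)) * x i ^ E"
    by (simp add: mult.assoc)
  moreover have "(\<Prod>j\<in>{..<N * E} - F. x (a j)) * x i ^ (card F - E) \<in> C"
    using C x a i is_subsemiring_prod is_subsemiring_power
    by (metis (no_types, lifting) DiffD1 is_subsemiring_def lessThan_iff)
  ultimately show ?thesis using J xE i unfolding is_ideal_def by metis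
qed

lemma is_subsemiring_ringA: "is_subsemiring (ringA n)"
  unfolding ringA_def by (rule is_subsemiring_vars_in)

lemma var_Inl_in_ringA: "i < n - 1 \<Longrightarrow> var (Inl i) \<in> ringA n"
  unfolding ringA_def by (rule vars_in_var) simp

lemma idm_pow_subset_if_var_powers:
  assumes n: "n \<ge> 2" and J: "is_ideal (ringA n) J" and pow: "\<forall>i<n-1. \<exists>e. var (Inl i) ^ e \<in> J"
  shows "\<exists>t. idm_pow n t \<subseteq> J"
proof -
  obtain e where e: "\<forall>i<n-1. var (Inl i) ^ e i \<in> J" using pow by metis
  define E where "E = (\<Sum>i<n-1. e i)"
  have XE: "\<forall>i<n-1. var (Inl i) ^ E \<in> J"
  proof (intro allI impI)
    fix i assume "i < n - 1"
    moreover have "e i \<le> E" unfolding E_def using \<open>i < n - 1\<close> by (intro member_le_sum) auto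
    ultimately show "var (Inl i) ^ E \<in> J"
      using ideal_power_mono[OF is_subsemiring_ringA J var_Inl_in_ringA] e by blast
  qed
  have "idm_pow n ((n - 1) * E) \<subseteq> J"
    unfolding idm_pow_def
  proof (rule ideal_gen_least[OF J], clarify)
    fix a assume "\<forall>j<(n - 1) * E. a j < n - 1"
    then show "(\<Prod>j<(n - 1) * E. var (Inl (a j))) \<in> J"
      by (intro prod_mem_ideal_if_powers[OF is_subsemiring_ringA J]) (use var_Inl_in_ringA XE n in auto)
  qed
  then show ?thesis by blast
qed

section \<open>The grading and the Rees map\<close>

lemma ringA_subset_ringAT: "ringA n \<subseteq> ringAT n"
  unfolding ringA_def ringAT_def by (rule vars_in_mono) auto

lemma ringT_subset_ringAT: "ringT n \<subseteq> ringAT n"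
  unfolding ringT_def ringAT_def by (rule vars_in_mono) auto

lemma is_subsemiring_ringAT: "is_subsemiring (ringAT n)"
  unfolding ringAT_def by (rule is_subsemiring_vars_in)

lemma degX_superset:
  assumes "finite S" "Poly_Mapping.keys m \<subseteq> S"
  shows "degX m = (\<Sum>v\<in>S. if isl v then Poly_Mapping.lookup m v else 0)"
  unfolding degX_def using assms by (intro sum.mono_neutral_left) (auto simp: in_keys_iff)

lemma degX_add: "degX (a + b) = degX a + degX b"
proof -
  let ?S = "Poly_Mapping.keys a \<union> Poly_Mapping.keys b"
  have "degX (a + b) = (\<Sum>v\<in>?S. (if isl v then Poly_Mapping.lookup a v else 0) +
                                  (if isl v then Poly_Mapping.lookup b v else 0))"
    by (simp add: degX_superset[of ?S] keys_add_nat) (intro sum.cong refl, simp add: lookup_add)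
  then show ?thesis
    by (simp add: sum.distrib degX_superset[of ?S])
qed

lemma degX_eq_0: "Poly_Mapping.keys m \<subseteq> Inr ` X \<Longrightarrow> degX m = 0"
  unfolding degX_def by (intro sum.neutral) auto

lemma degX_eq_sum: "Poly_Mapping.keys m \<subseteq> Inl ` X \<Longrightarrow> degX m = (\<Sum>v\<in>Poly_Mapping.keys m. Poly_Mapping.lookup m v)"
  unfolding degX_def by (intro sum.cong) auto

lemma ringT_mult_compAT:
  assumes g: "g \<in> ringT n" and p: "p \<in> compAT n \<nu>"
  shows "g * p \<in> compAT n \<nu>"
  unfolding compAT_def
proof (intro CollectI conjI ballI)
  have "g \<in> ringAT n" "p \<in> ringAT n" using g p ringT_subset_ringAT by (auto simp: compAT_def)
  then show "g * p \<in> ringAT n"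
    using is_subsemiring_ringAT unfolding is_subsemiring_def by blast
  fix m assume "m \<in> Poly_Mapping.keys (g * p)"
  then obtain a b where m: "m = a + b" "a \<in> Poly_Mapping.keys g" "b \<in> Poly_Mapping.keys p"
    using keys_mult[of g p] by blast
  have "degX a = 0" using m(2) g unfolding ringT_def vars_in_def by (intro degX_eq_0) blast
  moreover have "degX b = \<nu>" using m(3) p unfolding compAT_def by blast
  ultimately show "degX m = \<nu>" using m(1) by (simp add: degX_add)
qed

lemma subst_fix_ringA:
  assumes "p \<in> ringA n" "\<And>i. i < n - 1 \<Longrightarrow> \<sigma> (Inl i) = var (Inl i)"
  shows "subst \<sigma> p = p"
proof (rule subst_id)
  fix m v assume "m \<in> Poly_Mapping.keys p" "v \<in> Poly_Mapping.keys m"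
  then have "v \<in> Inl ` {..<n-1}" using assms(1) unfolding ringA_def vars_in_def by auto
  then show "\<sigma> v = var v" using assms(2) by auto
qed

lemma sum_single_inj_eq_0:
  assumes "inj_on \<phi> (Poly_Mapping.keys p)"
    and "(\<Sum>k\<in>Poly_Mapping.keys p. Poly_Mapping.single (\<phi> k) (Poly_Mapping.lookup p k)) = 0"
  shows "p = 0"
proof (rule poly_mapping_eqI)
  fix k0
  show "Poly_Mapping.lookup p k0 = Poly_Mapping.lookup 0 k0"
  proof (cases "k0 \<in> Poly_Mapping.keys p")
    case True
    have "0 = Poly_Mapping.lookup (\<Sum>k\<in>Poly_Mapping.keys p. Poly_Mapping.single (\<phi> k) (Poly_Mapping.lookup p k)) (\<phi> k0)"
      using assms(2) by simp
    also have "\<dots> = (\<Sum>k\<in>Poly_Mapping.keys p. if k = k0 then Poly_Mapping.lookup p k else 0)"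
      unfolding lookup_sum
    proof (intro sum.cong refl)
      fix k assume "k \<in> Poly_Mapping.keys p"
      then have "\<phi> k = \<phi> k0 \<longleftrightarrow> k = k0" using inj_onD[OF assms(1) _ _ True] by blast
      then show "Poly_Mapping.lookup (Poly_Mapping.single (\<phi> k) (Poly_Mapping.lookup p k)) (\<phi> k0) =
          (if k = k0 then Poly_Mapping.lookup p k else 0)"
        by (simp add: lookup_single when_def)
    qed
    also have "\<dots> = Poly_Mapping.lookup p k0" using True by simp
    finally show ?thesis by simp
  qed (simp add: in_keys_iff)
qed

lemma mult_single_one_eq_0D:
  fixes p :: "'k::comm_ring_1 mpoly"
  assumes "p * Poly_Mapping.single \<mu> 1 = 0"
  shows "p = 0"
proof -
  have "p * Poly_Mapping.single \<mu> 1 = (\<Sum>k\<in>Poly_Mapping.keys p. Poly_Mapping.single (k + \<mu>) (Poly_Mapping.lookup p k))"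
    by (subst poly_mapping_expansion) (simp add: sum_distrib_right mult_single)
  moreover have "inj_on (\<lambda>k. k + \<mu>) (Poly_Mapping.keys p)"
    by (rule inj_onI) simp
  ultimately show ?thesis using assms sum_single_inj_eq_0[of "\<lambda>k. k + \<mu>" p] by simp
qed

lemma symK_zero: "0 \<in> symK n f"
  unfolding symK_def by (rule ideal_gen.zero)

lemma symK_add: "x \<in> symK n f \<Longrightarrow> y \<in> symK n f \<Longrightarrow> x + y \<in> symK n f"
  unfolding symK_def by (rule ideal_gen_add)

lemma symK_mult: "a \<in> ringAT n \<Longrightarrow> x \<in> symK n f \<Longrightarrow> a * x \<in> symK n f"
  unfolding symK_def by (rule ideal_gen_mult[OF is_subsemiring_ringAT])

definition rees_map :: "nat \<Rightarrow> (nat \<Rightarrow> 'k::comm_ring_1 mpoly) \<Rightarrow> 'k mpoly \<Rightarrow> 'k mpoly" where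
  "rees_map n f = subst (\<lambda>v. case v of Inl i \<Rightarrow> var (Inl i) | Inr j \<Rightarrow> f j * var (Inr n))"

lemma reesJ_eq: "reesJ n f = {g \<in> ringAT n. rees_map n f g = 0}"
  by (simp add: reesJ_def rees_map_def)

lemma rees_map_symK:
  assumes f: "\<forall>i<n. f i \<in> ringA n" and x: "x \<in> symK n f"
  shows "rees_map n f x = 0"
  using x unfolding symK_def
proof (induction x rule: ideal_gen.induct)
  case (step c s x)
  then obtain b where s: "s = (\<Sum>i<n. b i * var (Inr i))"
    and b: "\<forall>i<n. b i \<in> ringA n" and syz: "(\<Sum>i<n. b i * f i) = 0"
    by auto
  have "rees_map n f s = (\<Sum>i<n. b i * (f i * var (Inr n)))"
    unfolding s rees_map_def subst_sum subst_mult subst_var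
  proof (intro sum.cong refl)
    fix i assume "i \<in> {..<n}"
    then have "subst (\<lambda>v. case v of Inl i \<Rightarrow> var (Inl i) | Inr j \<Rightarrow> f j * var (Inr n)) (b i) = b i"
      using b by (intro subst_fix_ringA[of _ n]) auto
    then show "subst (\<lambda>v. case v of Inl i \<Rightarrow> var (Inl i) | Inr j \<Rightarrow> f j * var (Inr n)) (b i) *
        (case Inr i of Inl i \<Rightarrow> var (Inl i) | Inr j \<Rightarrow> f j * var (Inr n)) = b i * (f i * var (Inr n))"
      by simp
  qed
  also have "\<dots> = (\<Sum>i<n. b i * f i) * var (Inr n)"
    by (simp add: sum_distrib_right mult.assoc)
  finally have "rees_map n f s = 0" using syz by simp
  then show ?case using step by (simp add: rees_map_def subst_add subst_mult)
qed (simp add: rees_map_def)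

lemma subst_rees_map_at_one:
  assumes f: "\<forall>i<n. f i \<in> ringA n" and g: "g \<in> ringT n"
  shows "subst (\<lambda>v. if v = Inr n then 1 else var v) (rees_map n f g) = hmap n f g"
  unfolding rees_map_def hmap_def subst_comp
proof (rule subst_cong)
  fix m v assume "m \<in> Poly_Mapping.keys g" "v \<in> Poly_Mapping.keys m"
  then obtain j where v: "v = Inr j" "j < n" using g unfolding ringT_def vars_in_def by auto
  then have "subst (\<lambda>v. if v = Inr n then 1 else var v) (f j) = f j"
    using f by (intro subst_fix_ringA[of _ n]) auto
  then show "subst (\<lambda>v. if v = Inr n then 1 else var v)
               (case v of Inl i \<Rightarrow> var (Inl i) | Inr j \<Rightarrow> f j * var (Inr n)) =
             (case v of Inl i \<Rightarrow> var (Inl i) | Inr j \<Rightarrow> f j)"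
    using v by (simp add: subst_mult)
qed

lemma ann_sym_subset_ker_h:
  assumes n: "n \<ge> 2" and f: "\<forall>i<n. f i \<in> ringA n"
  shows "ann_sym n f \<nu> \<subseteq> ker_h n f"
proof
  fix g assume "g \<in> ann_sym n f \<nu>"
  then have g: "g \<in> ringT n" and ann: "\<forall>p\<in>compAT n \<nu>. g * p \<in> symK n f"
    unfolding ann_sym_def by auto
  define \<mu> where "\<mu> = Poly_Mapping.single (Inl 0 :: nat + nat) \<nu>"
  have X: "var (Inl 0) ^ \<nu> = Poly_Mapping.single \<mu> 1" unfolding \<mu>_def by (rule var_power)
  have XA: "var (Inl 0) ^ \<nu> \<in> ringA n"
    using n var_Inl_in_ringA[of 0 n] by (intro is_subsemiring_power[OF is_subsemiring_ringA]) simp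
  then have "var (Inl 0) ^ \<nu> \<in> compAT n \<nu>"
    using ringA_subset_ringAT by (auto simp: compAT_def X \<mu>_def degX_def)
  then have "rees_map n f (g * var (Inl 0) ^ \<nu>) = 0"
    using ann f rees_map_symK by blast
  moreover have "rees_map n f (var (Inl 0) ^ \<nu>) = var (Inl 0) ^ \<nu>"
    using XA unfolding rees_map_def by (rule subst_fix_ringA) simp
  ultimately have "rees_map n f g * Poly_Mapping.single \<mu> 1 = 0"
    by (simp add: rees_map_def subst_mult X)
  then have "rees_map n f g = 0" by (rule mult_single_one_eq_0D)
  then have "hmap n f g = 0" using subst_rees_map_at_one[OF f g] by simp
  then show "g \<in> ker_h n f" using g unfolding ker_h_def by blast
qed

text \<open>Since the f_i are forms of degree d, substituting t^d for t in g(f_1 t, ..., f_n t)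
  gives g(f)(t X); as t |-> t^d is injective, h(g) = 0 forces g(f t) = 0.\<close>

definition power_t :: "nat \<Rightarrow> nat \<Rightarrow> nat + nat \<Rightarrow> 'k::comm_ring_1 mpoly" where
  "power_t n d v = (if v = Inr n then var (Inr n) ^ d else var v)"

definition scale_X :: "nat \<Rightarrow> nat + nat \<Rightarrow> 'k::comm_ring_1 mpoly" where
  "scale_X n v = (case v of Inl i \<Rightarrow> var (Inr n) * var (Inl i) | Inr j \<Rightarrow> var (Inr j))"

lemma eval_monom_power_t:
  assumes "d \<ge> 1"
  shows "eval_monom (power_t n d) m =
    Poly_Mapping.single (m + Poly_Mapping.single (Inr n) ((d - 1) * Poly_Mapping.lookup m (Inr n))) 1"
proof -
  let ?t = "var (Inr n) :: 'a mpoly"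
  have pw: "power_t n d v ^ e = var v ^ e * (if v = Inr n then ?t ^ ((d - 1) * e) else 1)" for v e
  proof (cases "v = Inr n")
    case True
    have "d * e = e + (d - 1) * e" using assms by (simp add: algebra_simps)
    then show ?thesis using True by (simp add: power_t_def power_mult[symmetric] power_add)
  qed (simp add: power_t_def)
  have "eval_monom (power_t n d) m = eval_monom var m *
      (\<Prod>v\<in>Poly_Mapping.keys m. if v = Inr n then ?t ^ ((d - 1) * Poly_Mapping.lookup m v) else 1)"
    unfolding eval_monom_def pw prod.distrib by simp
  also have "\<dots> = Poly_Mapping.single m 1 * ?t ^ ((d - 1) * Poly_Mapping.lookup m (Inr n))"
    by (simp add: eval_monom_var prod.delta in_keys_iff)
  finally show ?thesis by (simp add: var_power mult_single)
qed

lemma subst_power_t_eq_0D: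
  fixes p :: "'k::comm_ring_1 mpoly"
  assumes "d \<ge> 1" "subst (power_t n d) p = 0"
  shows "p = 0"
proof -
  define \<Psi> where "\<Psi> m = m + Poly_Mapping.single (Inr n) ((d - 1) * Poly_Mapping.lookup m (Inr n))"
    for m :: "(nat + nat) \<Rightarrow>\<^sub>0 nat"
  have "subst (power_t n d) p = (\<Sum>m\<in>Poly_Mapping.keys p. Poly_Mapping.single (\<Psi> m) (Poly_Mapping.lookup p m))"
    unfolding subst_eq_sum_eval_monom eval_monom_power_t[OF assms(1)] \<Psi>_def by (simp add: mult_single)
  moreover have "inj_on \<Psi> (Poly_Mapping.keys p)"
  proof (rule inj_onI)
    fix a b assume e: "\<Psi> a = \<Psi> b"
    show "a = b"
    proof (rule poly_mapping_eqI)
      fix w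
      have "Poly_Mapping.lookup (\<Psi> a) w = Poly_Mapping.lookup (\<Psi> b) w" using e by simp
      then have *: "Poly_Mapping.lookup a w + (if w = Inr n then (d - 1) * Poly_Mapping.lookup a (Inr n) else 0) =
                    Poly_Mapping.lookup b w + (if w = Inr n then (d - 1) * Poly_Mapping.lookup b (Inr n) else 0)"
        by (auto simp: \<Psi>_def lookup_add lookup_single when_def)
      show "Poly_Mapping.lookup a w = Poly_Mapping.lookup b w"
      proof (cases "w = Inr n")
        case True
        then have "d * Poly_Mapping.lookup a w = d * Poly_Mapping.lookup b w"
          using * assms(1) by (simp add: algebra_simps)
        then show ?thesis using assms(1) by simp
      qed (use * in simp)
    qed
  qed
  ultimately show ?thesis using assms(2) sum_single_inj_eq_0[of \<Psi> p] by simp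
qed

lemma subst_scale_X:
  assumes "p \<in> compA n d"
  shows "subst (scale_X n) p = var (Inr n) ^ d * p"
proof -
  let ?t = "var (Inr n) :: 'a mpoly"
  have "eval_monom (scale_X n) m = ?t ^ d * Poly_Mapping.single m 1" if m: "m \<in> Poly_Mapping.keys p" for m
  proof -
    have km: "Poly_Mapping.keys m \<subseteq> Inl ` {..<n-1}" and dm: "degX m = d"
      using assms m unfolding compA_def ringA_def vars_in_def by auto
    have "eval_monom (scale_X n) m = (\<Prod>v\<in>Poly_Mapping.keys m. (?t * var v) ^ Poly_Mapping.lookup m v)"
      unfolding eval_monom_def using km by (intro prod.cong refl) (auto simp: scale_X_def)
    also have "\<dots> = ?t ^ degX m * eval_monom var m"
      by (simp add: eval_monom_def power_mult_distrib prod.distrib degX_eq_sum[OF km] power_sum)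
    finally show ?thesis by (simp add: dm eval_monom_var)
  qed
  then have "subst (scale_X n) p =
      (\<Sum>m\<in>Poly_Mapping.keys p. ?t ^ d * (Poly_Mapping.single 0 (Poly_Mapping.lookup p m) * Poly_Mapping.single m 1))"
    unfolding subst_eq_sum_eval_monom by (intro sum.cong refl) (simp add: mult.left_commute)
  also have "\<dots> = ?t ^ d * p"
    by (subst (2) poly_mapping_expansion) (simp add: sum_distrib_left mult_single)
  finally show ?thesis .
qed

lemma rees_map_eq_0_if_ker_h:
  assumes d: "d \<ge> 1" and f: "\<forall>i<n. f i \<in> compA n d" and g: "g \<in> ker_h n f"
  shows "rees_map n f g = 0"
proof -
  have gT: "g \<in> ringT n" and h0: "hmap n f g = 0" using g unfolding ker_h_def by auto
  have "subst (power_t n d) (rees_map n f g) = subst (scale_X n) (hmap n f g)"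
    unfolding rees_map_def hmap_def subst_comp
  proof (rule subst_cong)
    fix m v assume "m \<in> Poly_Mapping.keys g" "v \<in> Poly_Mapping.keys m"
    then obtain j where v: "v = Inr j" "j < n" using gT unfolding ringT_def vars_in_def by auto
    then have "subst (power_t n d) (f j) = f j"
      using f by (intro subst_fix_ringA[of _ n]) (auto simp: power_t_def compA_def)
    moreover have "subst (scale_X n) (f j) = var (Inr n) ^ d * f j"
      using f v by (intro subst_scale_X) auto
    ultimately show "subst (power_t n d) (case v of Inl i \<Rightarrow> var (Inl i) | Inr j \<Rightarrow> f j * var (Inr n)) =
        subst (scale_X n) (case v of Inl i \<Rightarrow> var (Inl i) | Inr j \<Rightarrow> f j)"
      using v by (simp add: subst_mult power_t_def mult.commute)
  qed
  then show ?thesis using h0 subst_power_t_eq_0D[OF d] by simp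
qed

section \<open>Torsion in the symmetric algebra\<close>

definition annA :: "nat \<Rightarrow> (nat \<Rightarrow> 'k::comm_ring_1 mpoly) \<Rightarrow> 'k mpoly \<Rightarrow> 'k mpoly set" where
  "annA n f x = {s \<in> ringA n. s * x \<in> symK n f}"

lemma is_ideal_annA:
  fixes x :: "'k::comm_ring_1 mpoly"
  shows "is_ideal (ringA n) (annA n f x)"
  unfolding is_ideal_def
proof (intro conjI ballI)
  show "0 \<in> annA n f x"
    by (simp add: annA_def symK_zero is_subsemiring_ringA[unfolded is_subsemiring_def])
  fix s s' assume "s \<in> annA n f x" "s' \<in> annA n f x"
  then show "s + s' \<in> annA n f x"
    by (simp add: annA_def symK_add distrib_right is_subsemiring_ringA[unfolded is_subsemiring_def])
next
  fix a s :: "'k mpoly" assume a: "a \<in> ringA n" and s: "s \<in> annA n f x"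
  then have "a * (s * x) \<in> symK n f"
    using ringA_subset_ringAT symK_mult unfolding annA_def by blast
  then show "a * s \<in> annA n f x"
    using a s by (simp add: annA_def mult.assoc is_subsemiring_ringA[unfolded is_subsemiring_def])
qed (auto simp: annA_def)

lemma var_power_in_annA:
  assumes lin: "linear_type_outside_m n f" and x: "x \<in> reesJ n f" and i: "i < n - 1"
  shows "\<exists>e. var (Inl i) ^ e \<in> annA n f x"
proof (rule ccontr)
  assume "\<not> ?thesis"
  then obtain P where P: "is_prime_ideal (ringA n) P" "annA n f x \<subseteq> P" "var (Inl i) \<notin> P"
    using prime_ideal_avoiding_powers[OF is_subsemiring_ringA is_ideal_annA] by blast
  have "var (Inl i) \<in> idm n"
    unfolding idm_def using i is_subsemiring_ringA
    by (intro ideal_gen_base) (auto simp: is_subsemiring_def)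
  then have "\<not> idm n \<subseteq> P" using P(3) by blast
  then obtain s where "s \<in> ringA n - P" "s * x \<in> symK n f"
    using lin P(1) x unfolding linear_type_outside_m_def by blast
  then show False using P(2) unfolding annA_def by blast
qed

lemma reesJ_torsion:
  assumes n: "n \<ge> 2" and lin: "linear_type_outside_m n f" and x: "x \<in> reesJ n f"
  shows "\<exists>t. \<forall>q\<in>idm_pow n t. q * x \<in> symK n f"
proof -
  obtain t where "idm_pow n t \<subseteq> annA n f x"
    using idm_pow_subset_if_var_powers[OF n is_ideal_annA] var_power_in_annA[OF lin x] by blast
  then show ?thesis unfolding annA_def by blast
qed

lemma ker_h_subset_ann_sym:
  assumes n: "n \<ge> 2" and d: "d \<ge> 1" and f: "\<forall>i<n. f i \<in> compA n d"
    and lin: "linear_type_outside_m n f" and H0: "H0m_vanishes n f \<nu>"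
  shows "ker_h n f \<subseteq> ann_sym n f \<nu>"
proof
  fix g assume g: "g \<in> ker_h n f"
  then have gT: "g \<in> ringT n" unfolding ker_h_def by blast
  have "g * p \<in> symK n f" if p: "p \<in> compAT n \<nu>" for p
  proof -
    have gp: "g * p \<in> compAT n \<nu>" using gT p by (rule ringT_mult_compAT)
    moreover have "rees_map n f (g * p) = 0"
      using rees_map_eq_0_if_ker_h[OF d f g] by (simp add: rees_map_def subst_mult)
    ultimately have "g * p \<in> reesJ n f" unfolding reesJ_eq compAT_def by blast
    then show ?thesis using reesJ_torsion[OF n lin] gp H0 unfolding H0m_vanishes_def by blast
  qed
  then show "g \<in> ann_sym n f \<nu>" using gT unfolding ann_sym_def by blast
qed

theorem mainTheorem14:
  fixes n d :: nat and f :: "nat \<Rightarrow> 'k::field mpoly" and \<eta> :: int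
  assumes "n \<ge> 3" and "d \<ge> 1"
    and "\<forall>i<n. f i \<in> compA n d \<and> f i \<noteq> 0"
    and "linear_type_outside_m n f"
    and "\<forall>\<nu>::nat. int \<nu> \<ge> \<eta> \<longrightarrow> H0m_vanishes n f \<nu>"
  shows "\<forall>\<nu>::nat. int \<nu> \<ge> \<eta> \<longrightarrow> ann_sym n f \<nu> = ker_h n f"
proof (intro allI impI)
  fix \<nu> :: nat assume "int \<nu> \<ge> \<eta>"
  have n: "n \<ge> 2" using assms(1) by simp
  have f: "\<forall>i<n. f i \<in> compA n d" using assms(3) by blast
  then have "\<forall>i<n. f i \<in> ringA n" unfolding compA_def by blast
  with n have "ann_sym n f \<nu> \<subseteq> ker_h n f" by (rule ann_sym_subset_ker_h)
  moreover have "ker_h n f \<subseteq> ann_sym n f \<nu>"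
    using ker_h_subset_ann_sym[OF n assms(2) f assms(4)] assms(5) \<open>int \<nu> \<ge> \<eta>\<close> by blast
  ultimately show "ann_sym n f \<nu> = ker_h n f" by blast
qed

end
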